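(* Let $a\in[0,1]$ with $a\neq \frac12$, and define $f_a:[0,1]\to[0,1]$ by $$f_a(x)=\begin{cases}(1-2a)x^2+2ax, & x\in[0,\frac13],\\ x, & x\in(\frac13,1].\end{cases}$$ For $x^{(0)}\in[0,1]$ put $x^{(n)}=f_a^n(x^{(0)})$, where $f_a^n$ denotes the $n$-fold composition of $f_a$ with itself. Then: 1. The set of fixed points of $f_a$ is $\{0\}\cup(\frac13,1]$. 2. If $0\le a<\frac12$, then $\lim_{n\to\infty}x^{(n)}=0$ for every $x^{(0)}\in[0,\frac13]$. 3. If $\frac12<a\le 1$, then for every $x^{(0)}\in(0,\frac13]$ there exist $n\in\mathbb N$ and $p\in(\frac13,\frac19(4a+1)]$ such that $f_a^n(x^{(0)})=p$ and $f_a^{n+1}(x^{(0)})=f_a(p)=p$.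
   Context: This map is the reduction to $[0,1]$ (via $y=1-x$) of the quadratic stochastic operator $x'=x^2+2p(x)xy$, $y'=2(1-p(x))xy+y^2$ on the 1-simplex, with $p(x)=a$ for $x\le\frac13$, $p(x)=b$ for $\frac13<x<\frac23$, $p(x)=c$ for $x\ge\frac23$, in the special case $b=c=\frac12$. *)

theory Defs
  imports "HOL-Analysis.Analysis"
begin

definition f_a :: "real \<Rightarrow> real \<Rightarrow> real" where
  "f_a a x = (if x \<le> 1/3 then (1 - 2*a) * x^2 + 2*a*x else x)"

end

theory Submission
  imports Defs
begin

text \<open>On \<open>[0, 1/3]\<close> the map is \<open>x \<mapsto> x \<cdot> ((1 - 2a) x + 2a)\<close>, whose multiplier lies
  between \<open>2a\<close> and \<open>(1 + 4a)/3\<close>; every point of \<open>(1/3, 1]\<close> is fixed. For \<open>a < 1/2\<close>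
  the multiplier is at most \<open>(1 + 4a)/3 < 1\<close>, so orbits in \<open>[0, 1/3]\<close> decay geometrically
  to \<open>0\<close>. For \<open>a > 1/2\<close> it is at least \<open>(1 + 4a)/3 > 1\<close>, so a positive orbit grows
  geometrically until it first leaves \<open>[0, 1/3]\<close>; as \<open>f\<^sub>a\<close> is increasing on \<open>[0, 1/3]\<close>,
  it lands in \<open>(1/3, f\<^sub>a(1/3)] = (1/3, (4a + 1)/9]\<close> and stays there.\<close>

lemma f_a_le_third: "x \<le> 1/3 \<Longrightarrow> f_a a x = ((1 - 2*a) * x + 2*a) * x"
  unfolding f_a_def by (simp add: power2_eq_square algebra_simps)

lemma f_a_gt_third: "1/3 < x \<Longrightarrow> f_a a x = x"
  unfolding f_a_def by simp

lemma f_a_fixed_points: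
  fixes a :: real
  assumes "a \<noteq> 1/2"
  shows "{x \<in> {0..1}. f_a a x = x} = {0} \<union> {1/3<..1}"
proof (intro set_eqI iffI)
  fix x assume "x \<in> {x \<in> {0..1}. f_a a x = x}"
  hence x: "0 \<le> x" "x \<le> 1" "f_a a x = x" by auto
  show "x \<in> {0} \<union> {1/3<..1}"
  proof (cases "x \<le> 1/3")
    case True
    have "x * ((1 - 2*a) * (x - 1)) = 0"
      using x f_a_le_third[OF True, of a] by (simp add: algebra_simps)
    with True assms show ?thesis by auto
  next
    case False
    with x show ?thesis by auto
  qed
qed (auto simp: f_a_def)

lemma f_a_contracting:
  fixes a x :: real
  assumes "0 \<le> a" "a < 1/2" "0 \<le> x" "x \<le> 1/3"
  shows "0 \<le> f_a a x \<and> f_a a x \<le> (1 + 4*a)/3 * x"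
proof -
  have "(1 - 2*a) * x \<le> (1 - 2*a) * (1/3)"
    using assms by (intro mult_left_mono) auto
  moreover have "0 \<le> (1 - 2*a) * x"
    using assms by simp
  ultimately have lo: "0 \<le> (1 - 2*a) * x + 2*a" and hi: "(1 - 2*a) * x + 2*a \<le> (1 + 4*a)/3"
    using assms by (auto simp: field_simps)
  show ?thesis
    unfolding f_a_le_third[OF assms(4)]
    using mult_nonneg_nonneg[OF lo assms(3)] mult_right_mono[OF hi assms(3)] by blast
qed

lemma f_a_expanding:
  fixes a x :: real
  assumes "1/2 < a" "0 \<le> x" "x \<le> 1/3"
  shows "(1 + 4*a)/3 * x \<le> f_a a x"
proof -
  have "(1 - 2*a) * (1/3) \<le> (1 - 2*a) * x"
    using assms by (intro mult_left_mono_neg) auto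
  hence "(1 + 4*a)/3 \<le> (1 - 2*a) * x + 2*a"
    by simp
  hence "(1 + 4*a)/3 * x \<le> ((1 - 2*a) * x + 2*a) * x"
    using assms(2) by (rule mult_right_mono)
  with assms show ?thesis
    by (simp add: f_a_le_third)
qed

lemma f_a_le_f_a_third:
  fixes a x :: real
  assumes "0 \<le> a" "0 \<le> x" "x \<le> 1/3"
  shows "f_a a x \<le> (4*a + 1)/9"
proof -
  have "(4*a + 1)/9 - f_a a x = (1/3 - x) * ((1/3 + x) + 2*a * (2/3 - x))"
    using assms by (simp add: f_a_le_third field_simps)
  also have "\<dots> \<ge> 0"
    using assms by (intro mult_nonneg_nonneg add_nonneg_nonneg) auto
  finally show ?thesis by simp
qed

lemma funpow_tendsto_zero_if_contracting:
  fixes g :: "real \<Rightarrow> real"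
  assumes q: "0 \<le> q" "q < 1"
    and contr: "\<And>x. 0 \<le> x \<Longrightarrow> x \<le> c \<Longrightarrow> 0 \<le> g x \<and> g x \<le> q * x"
    and x0: "0 \<le> x0" "x0 \<le> c"
  shows "(\<lambda>n. (g ^^ n) x0) \<longlonglongrightarrow> 0"
proof -
  have bound: "0 \<le> (g ^^ n) x0 \<and> (g ^^ n) x0 \<le> q^n * x0" for n
  proof (induction n)
    case 0
    with x0 show ?case by simp
  next
    case (Suc n)
    let ?y = "(g ^^ n) x0"
    have "q^n * x0 \<le> 1 * c"
      using q x0 by (intro mult_mono) (auto simp: power_le_one)
    with Suc have "0 \<le> g ?y" "g ?y \<le> q * ?y"
      using contr[of ?y] by auto
    moreover have "q * ?y \<le> q * (q^n * x0)"
      using Suc q by (intro mult_left_mono) auto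
    ultimately show ?case by simp
  qed
  have "(\<lambda>n. q^n * x0) \<longlonglongrightarrow> 0"
    using q by (intro tendsto_mult_left_zero LIMSEQ_power_zero) auto
  thus ?thesis
    by (rule Lim_null_comparison[rotated]) (use bound in auto)
qed

lemma funpow_ge_power_while_below:
  fixes g :: "real \<Rightarrow> real"
  assumes r: "1 \<le> r"
    and grow: "\<And>x. 0 < x \<Longrightarrow> x \<le> c \<Longrightarrow> r * x \<le> g x"
    and x0: "0 < x0"
    and below: "\<forall>k<m. (g ^^ k) x0 \<le> c"
  shows "r^m * x0 \<le> (g ^^ m) x0"
  using below
proof (induction m)
  case 0
  show ?case by simp
next
  case (Suc m)
  let ?y = "(g ^^ m) x0"
  have IH: "r^m * x0 \<le> ?y"
    using Suc by auto
  moreover have "0 < r^m * x0"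
    using r x0 by simp
  ultimately have "r * ?y \<le> g ?y"
    using Suc.prems grow[of ?y] by auto
  moreover have "r * (r^m * x0) \<le> r * ?y"
    using IH r by (intro mult_left_mono) auto
  ultimately show ?case by simp
qed

lemma funpow_escapes_if_expanding:
  fixes g :: "real \<Rightarrow> real"
  assumes r: "1 < r"
    and grow: "\<And>x. 0 < x \<Longrightarrow> x \<le> c \<Longrightarrow> r * x \<le> g x"
    and x0: "0 < x0"
  obtains n where "c < (g ^^ n) x0" "\<forall>k<n. 0 < (g ^^ k) x0 \<and> (g ^^ k) x0 \<le> c"
proof -
  have "\<exists>n. c < (g ^^ n) x0"
  proof (rule ccontr)
    assume "\<nexists>n. c < (g ^^ n) x0"
    hence below: "(g ^^ n) x0 \<le> c" for n
      by (simp add: not_less)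
    have "r^n * x0 \<le> (g ^^ n) x0" for n
      by (rule funpow_ge_power_while_below[OF _ grow x0]) (use r below in auto)
    with below have bound: "r^n * x0 \<le> c" for n
      by (meson order.trans)
    obtain N where "c / x0 < r^N"
      using real_arch_pow[OF r] by blast
    hence "c < r^N * x0"
      using x0 by (simp add: field_simps)
    with bound[of N] show False
      by simp
  qed
  then obtain n where esc: "c < (g ^^ n) x0" and first: "\<forall>k<n. (g ^^ k) x0 \<le> c"
    using exists_least_iff[of "\<lambda>n. c < (g ^^ n) x0"] by (auto simp: not_less)
  have "0 < (g ^^ k) x0" if "k < n" for k
  proof -
    have "r^k * x0 \<le> (g ^^ k) x0"
      by (rule funpow_ge_power_while_below[OF _ grow x0]) (use r first that in auto)
    moreover have "0 < r^k * x0"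
      using r x0 by simp
    ultimately show ?thesis by linarith
  qed
  with esc first that show ?thesis by blast
qed

theorem theorem2p1:
  fixes a :: real
  assumes "0 \<le> a" "a \<le> 1" "a \<noteq> 1/2"
  shows "{x \<in> {0..1}. f_a a x = x} = {0} \<union> {1/3<..1}
    \<and> (a < 1/2 \<longrightarrow> (\<forall>x0 \<in> {0..1/3}. (\<lambda>n. (f_a a ^^ n) x0) \<longlonglongrightarrow> 0))
    \<and> (1/2 < a \<longrightarrow> (\<forall>x0 \<in> {0<..1/3}. \<exists>n::nat. \<exists>p \<in> {1/3<..(4*a+1)/9}.
           (f_a a ^^ n) x0 = p \<and> (f_a a ^^ (Suc n)) x0 = f_a a p \<and> f_a a p = p))"
proof (intro conjI impI ballI)
  show "{x \<in> {0..1}. f_a a x = x} = {0} \<union> {1/3<..1}"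
    using f_a_fixed_points assms(3) .
next
  fix x0 :: real assume "a < 1/2" "x0 \<in> {0..1/3}"
  then show "(\<lambda>n. (f_a a ^^ n) x0) \<longlonglongrightarrow> 0"
    using assms(1) f_a_contracting
    by (intro funpow_tendsto_zero_if_contracting[where q = "(1 + 4*a)/3" and c = "1/3"]) auto
next
  fix x0 :: real assume hi: "1/2 < a" and x0: "x0 \<in> {0<..1/3}"
  have "1 < (1 + 4*a)/3"
    using hi by simp
  moreover have "(1 + 4*a)/3 * x \<le> f_a a x" if "0 < x" "x \<le> 1/3" for x
    using f_a_expanding[OF hi] that by simp
  ultimately obtain n where esc: "1/3 < (f_a a ^^ n) x0"
    and below: "\<forall>k<n. 0 < (f_a a ^^ k) x0 \<and> (f_a a ^^ k) x0 \<le> 1/3"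
    by (rule funpow_escapes_if_expanding[where c = "1/3"]) (use x0 in auto)
  then obtain k where n: "n = Suc k"
    using x0 by (cases n) auto
  define p where "p = (f_a a ^^ n) x0"
  have "0 < (f_a a ^^ k) x0" "(f_a a ^^ k) x0 \<le> 1/3"
    using below n by auto
  hence "p \<le> (4*a + 1)/9"
    using f_a_le_f_a_third[OF assms(1)] by (simp add: p_def n)
  moreover have "f_a a p = p"
    using esc f_a_gt_third by (simp add: p_def)
  ultimately show "\<exists>n::nat. \<exists>p \<in> {1/3<..(4*a+1)/9}.
           (f_a a ^^ n) x0 = p \<and> (f_a a ^^ (Suc n)) x0 = f_a a p \<and> f_a a p = p"
    using esc by (intro exI[of _ n] bexI[of _ p]) (auto simp: p_def)
qed

end
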